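(* Let $h=\prod_{i=1}^N h_i$ with $h_i\in\bar K[z]$ nonzero, let $h_i=q_i^2+\rho_i$ be part-square decompositions, and set $q=\prod_{i=1}^N q_i$ and $\rho=h-q^2$. Put $t_i=t_{q_i,\rho_i}$ and $t=t_{q,\rho}=v(\rho)-v(h)$, and assume $t_i\ge0$ for all $i$. Then $t\ge\min\{t_1,\dots,t_N\}$. Moreover: (a) if the minimum $\min\{t_1,\dots,t_N\}$ is attained by a unique index $i_0$, then $t=\min\{t_1,\dots,t_N\}$, and the decomposition $h=q^2+\rho$ is good if and only if the decomposition $h_{i_0}=q_{i_0}^2+\rho_{i_0}$ is good; (b) if $N=2$, every root $s_1\in\bar K$ of $h_1$ satisfies $v(s_1)>0$, every root $s_2\in\bar K$ of $h_2$ satisfies $v(s_2)<0$, both decompositions $h_i=q_i^2+\rho_i$ are good, and $\min\{t_1,t_2\}<2v(2)$, then $t=\min\{t_1,t_2\}$ and the decomposition $h=q^2+\rho$ is good.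
   Context: $K$ is a field of characteristic $0$, complete with respect to a discrete valuation $v$ (values in $\mathbb{Q}\cup\{+\infty\}$), with algebraically closed residue field $k$ of characteristic $2$; $v$ extends to a fixed algebraic closure $\bar K$. For nonzero $h(z)=\sum_iH_iz^i\in\bar K[z]$, $v(h)=\min_iv(H_i)$ (Gauss valuation). A part-square decomposition of $h$ is $h=q^2+\rho$ with $q,\rho\in\bar K[z]$, $\deg q\le\lceil\deg h/2\rceil$; $t_{q,\rho}=v(\rho)-v(h)$. A decomposition $h=q^2+\rho$ is good if either $t_{q,\rho}\ge2v(2)$, or $t_{q,\rho}<2v(2)$ and there is no part-square decomposition $h=\tilde q^2+\tilde\rho$ with $t_{\tilde q,\tilde\rho}>t_{q,\rho}$. *)

theory Defs
  imports "HOL-Computational_Algebra.Polynomial" "HOL-Library.Extended_Real"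
begin

definition is_valuation :: "('a::field \<Rightarrow> ereal) \<Rightarrow> bool" where
  "is_valuation v \<longleftrightarrow>
     (\<forall>x. v x = \<infinity> \<longleftrightarrow> x = 0) \<and>
     (\<forall>x. x \<noteq> 0 \<longrightarrow> (\<exists>r::rat. v x = ereal (of_rat r))) \<and>
     (\<forall>x y. v (x * y) = v x + v y) \<and>
     (\<forall>x y. min (v x) (v y) \<le> v (x + y))"

definition alg_closed_field :: "'a::field itself \<Rightarrow> bool" where
  "alg_closed_field _ \<longleftrightarrow> (\<forall>p::'a poly. 1 \<le> degree p \<longrightarrow> (\<exists>x. poly p x = 0))"

definition is_subfield :: "'a::field set \<Rightarrow> bool" where
  "is_subfield K \<longleftrightarrow> 0 \<in> K \<and> 1 \<in> K \<and>
     (\<forall>x\<in>K. \<forall>y\<in>K. x + y \<in> K \<and> x * y \<in> K \<and> - x \<in> K) \<and>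
     (\<forall>x\<in>K. x \<noteq> 0 \<longrightarrow> inverse x \<in> K)"

definition discrete_on :: "('a::field \<Rightarrow> ereal) \<Rightarrow> 'a set \<Rightarrow> bool" where
  "discrete_on v K \<longleftrightarrow> (\<exists>\<pi>\<in>K. \<pi> \<noteq> 0 \<and> 0 < v \<pi> \<and>
      (\<forall>x\<in>K. x \<noteq> 0 \<longrightarrow> (\<exists>k::int. v x = ereal (of_int k) * v \<pi>)))"

definition complete_on :: "('a::field \<Rightarrow> ereal) \<Rightarrow> 'a set \<Rightarrow> bool" where
  "complete_on v K \<longleftrightarrow> (\<forall>x::nat \<Rightarrow> 'a. (\<forall>n. x n \<in> K) \<longrightarrow>
      (\<forall>M::real. \<exists>N. \<forall>m\<ge>N. \<forall>n\<ge>N. ereal M \<le> v (x m - x n)) \<longrightarrow>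
      (\<exists>l\<in>K. \<forall>M::real. \<exists>N. \<forall>n\<ge>N. ereal M \<le> v (x n - l)))"

definition algebraic_over :: "'a::field set \<Rightarrow> bool" where
  "algebraic_over K \<longleftrightarrow> (\<forall>x::'a. \<exists>p. p \<noteq> 0 \<and> (\<forall>i. coeff p i \<in> K) \<and> poly p x = 0)"

text \<open>The residue field of (K, v) is algebraically closed: every monic polynomial
  with integral coefficients of positive degree has a root modulo the maximal ideal.\<close>
definition residue_alg_closed :: "('a::field \<Rightarrow> ereal) \<Rightarrow> 'a set \<Rightarrow> bool" where
  "residue_alg_closed v K \<longleftrightarrow> (\<forall>p. (\<forall>i. coeff p i \<in> K \<and> 0 \<le> v (coeff p i)) \<longrightarrow>
      lead_coeff p = 1 \<longrightarrow> 1 \<le> degree p \<longrightarrow>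
      (\<exists>x\<in>K. 0 \<le> v x \<and> 0 < v (poly p x)))"

text \<open>Gauss valuation of a polynomial (equals \<infinity> for the zero polynomial).\<close>
definition gauss_val :: "('a::field \<Rightarrow> ereal) \<Rightarrow> 'a poly \<Rightarrow> ereal" where
  "gauss_val v h = Min ((\<lambda>i. v (coeff h i)) ` {..degree h})"

definition part_square_dec :: "'a::field poly \<Rightarrow> 'a poly \<Rightarrow> 'a poly \<Rightarrow> bool" where
  "part_square_dec h q \<rho> \<longleftrightarrow> h = q ^ 2 + \<rho> \<and> degree q \<le> (degree h + 1) div 2"

definition dec_t :: "('a::field \<Rightarrow> ereal) \<Rightarrow> 'a poly \<Rightarrow> 'a poly \<Rightarrow> ereal" where
  "dec_t v q \<rho> = gauss_val v \<rho> - gauss_val v (q ^ 2 + \<rho>)"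

definition good_dec :: "('a::field \<Rightarrow> ereal) \<Rightarrow> 'a poly \<Rightarrow> 'a poly \<Rightarrow> 'a poly \<Rightarrow> bool" where
  "good_dec v h q \<rho> \<longleftrightarrow> h = q ^ 2 + \<rho> \<and>
     (2 * v 2 \<le> dec_t v q \<rho> \<or>
      (dec_t v q \<rho> < 2 * v 2 \<and>
       \<not> (\<exists>q' \<rho>'. part_square_dec h q' \<rho>' \<and> dec_t v q \<rho> < dec_t v q' \<rho>')))"

end

theory Submission
  imports Defs
begin

text \<open>
  Write \<open>t = v(\<rho>) - v(h)\<close> for \<open>h = q\<^sup>2 + \<rho>\<close>, with \<open>v\<close> the Gauss valuation, which is
  multiplicative (Gauss's lemma). For two factors
  \<open>h\<^sub>1 h\<^sub>2 - (q\<^sub>1 q\<^sub>2)\<^sup>2 = \<rho>\<^sub>1 q\<^sub>2\<^sup>2 + h\<^sub>1 \<rho>\<^sub>2\<close>, so \<open>t \<ge> min t\<^sub>1 t\<^sub>2\<close>, with equality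
  when the minimum is strict; splitting off one factor at a time gives the general bound and
  the value of \<open>t\<close> in part (a).

  For \<open>0 \<le> t < 2 v(2)\<close> a decomposition is good iff some odd-degree coefficient of \<open>\<rho>\<close> has
  minimal valuation. If none has, square roots of the even coefficients of \<open>\<rho>\<close> give \<open>e\<close> with
  \<open>v(\<rho> - e\<^sup>2) > v(\<rho>)\<close> (the cross terms of \<open>e\<^sup>2\<close> carry a factor 2), and \<open>q + e\<close>, cut off
  above degree \<open>deg h div 2\<close>, is a better decomposition; conversely a better decomposition
  \<open>q + d\<close> shows that \<open>\<rho>\<close> equals \<open>d\<^sup>2\<close> up to terms of larger valuation. The parity criterion
  is unchanged by multiplying with a nonzero square and by adding terms of larger valuation,
  which gives goodness in part (a).

  In part (b) with \<open>t\<^sub>1 = t\<^sub>2\<close>, the root conditions make the leading coefficient of \<open>h\<^sub>1\<close> and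
  the constant coefficient of \<open>h\<^sub>2\<close> the unique coefficients of minimal valuation. Goodness
  of \<open>h\<^sub>2\<close> then forces \<open>t > 0\<close>, so \<open>deg h\<^sub>1\<close> is even and the minimal odd coefficient of
  \<open>\<rho>\<^sub>1\<close> lies below \<open>deg h\<^sub>1\<close>; multiplied by the constant term of \<open>h\<^sub>2\<close> it stays minimal in
  \<open>\<rho> = \<rho>\<^sub>1 h\<^sub>2 + q\<^sub>1\<^sup>2 \<rho>\<^sub>2\<close>.
\<close>

lemma ereal_two_times: "2 * (x::ereal) = x + x"
  by (cases x) auto

lemma ereal_add_le_less: "a \<le> b \<Longrightarrow> c < d \<Longrightarrow> \<bar>a\<bar> \<noteq> \<infinity> \<Longrightarrow> a + c < b + (d::ereal)"
  by (cases a; cases b; cases c; cases d) auto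

lemma ereal_le_add_halves: "c \<le> 2 * x \<Longrightarrow> c \<le> 2 * y \<Longrightarrow> c \<le> x + (y::ereal)"
  by (cases c; cases x; cases y) auto

lemma ereal_less_add_halves: "c \<le> 2 * x \<Longrightarrow> c < 2 * y \<Longrightarrow> \<bar>c\<bar> \<noteq> \<infinity> \<Longrightarrow> c < x + (y::ereal)"
  by (cases c; cases x; cases y) auto

lemma ereal_add_two_times_le: "a \<le> 2 * x \<Longrightarrow> a + 2 * w \<le> 2 * (w + x::ereal)"
  by (cases a; cases x; cases w) auto

text \<open>The sum of the cross terms \<open>2 e\<^sub>i e\<^sub>j\<close> (\<open>i < j\<close>, \<open>i + j = m\<close>) of \<open>coeff (e\<^sup>2) m\<close>.\<close>
definition square_cross_coeff :: "'a::comm_ring_1 poly \<Rightarrow> nat \<Rightarrow> 'a" where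
  "square_cross_coeff e m = coeff (e ^ 2) m - (if even m then coeff e (m div 2) ^ 2 else 0)"

lemma coeff_square:
  "coeff (e ^ 2) m = (if even m then coeff e (m div 2) ^ 2 else 0) + square_cross_coeff e m"
  by (simp add: square_cross_coeff_def)

lemma square_pCons:
  "pCons a p ^ 2 = smult a (pCons a p) + pCons 0 (smult a p) + pCons 0 (pCons 0 (p ^ 2))"
  by (simp add: power2_eq_square mult_pCons_left mult_pCons_right add.assoc)

definition gauss_val_attained_odd :: "('a::field \<Rightarrow> ereal) \<Rightarrow> 'a poly \<Rightarrow> bool" where
  "gauss_val_attained_odd v f \<longleftrightarrow> (\<exists>k. odd k \<and> v (coeff f k) = gauss_val v f)"

definition dominant_coeff :: "('a::field \<Rightarrow> ereal) \<Rightarrow> 'a poly \<Rightarrow> nat \<Rightarrow> bool" where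
  "dominant_coeff v p n \<longleftrightarrow> (\<forall>k. k \<noteq> n \<longrightarrow> v (coeff p n) < v (coeff p k))"

locale valuation =
  fixes v :: "'a::field \<Rightarrow> ereal"
  assumes is_valuation: "is_valuation v"
begin

lemma v_eq_infinity_iff: "v x = \<infinity> \<longleftrightarrow> x = 0"
  using is_valuation unfolding is_valuation_def by blast

lemma v_zero [simp]: "v 0 = \<infinity>"
  by (simp add: v_eq_infinity_iff)

lemma v_mult: "v (x * y) = v x + v y"
  using is_valuation unfolding is_valuation_def by blast

lemma v_add_ge_min: "min (v x) (v y) \<le> v (x + y)"
  using is_valuation unfolding is_valuation_def by blast

lemma v_finite: "x \<noteq> 0 \<Longrightarrow> \<exists>r. v x = ereal r"
  using is_valuation unfolding is_valuation_def by blast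

lemma v_neq_minf [simp]: "v x \<noteq> -\<infinity>"
  by (cases "x = 0") (auto dest: v_finite)

lemma v_one [simp]: "v 1 = 0"
proof -
  obtain r where "v 1 = ereal r" using v_finite[of 1] by auto
  moreover have "v 1 = v 1 + v 1" using v_mult[of 1 1] by simp
  ultimately show ?thesis by simp
qed

lemma v_uminus [simp]: "v (- x) = v x"
proof -
  obtain r where r: "v (-1) = ereal r" using v_finite[of "-1"] by auto
  have "v 1 = v (-1) + v (-1)" using v_mult[of "-1" "-1"] by simp
  then have "v (-1) = 0" using r by simp
  then show ?thesis using v_mult[of "-1" x] by simp
qed

lemma v_add_eq_left: "v x < v y \<Longrightarrow> v (x + y) = v x"
  using v_add_ge_min[of x y] v_add_ge_min[of "x + y" "- y"]
  by (auto simp: min_def split: if_splits)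

lemma v_add_ge: "L \<le> v x \<Longrightarrow> L \<le> v y \<Longrightarrow> L \<le> v (x + y)"
  using v_add_ge_min[of x y] by (metis min.bounded_iff order_trans)

lemma v_add_gt: "L < v x \<Longrightarrow> L < v y \<Longrightarrow> L < v (x + y)"
  using v_add_ge_min[of x y] by (metis min_less_iff_conj order_less_le_trans)

lemma v_diff_ge: "L \<le> v x \<Longrightarrow> L \<le> v y \<Longrightarrow> L \<le> v (x - y)"
  using v_add_ge[of L x "- y"] by simp

lemma v_diff_gt: "L < v x \<Longrightarrow> L < v y \<Longrightarrow> L < v (x - y)"
  using v_add_gt[of L x "- y"] by simp

lemma v_power2: "v (x ^ 2) = 2 * v x"
  by (cases "v x") (auto simp: power2_eq_square v_mult)

lemma v_sum_ge: "finite A \<Longrightarrow> (\<And>i. i \<in> A \<Longrightarrow> L \<le> v (f i)) \<Longrightarrow> L \<le> v (sum f A)"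
  by (induction A rule: finite_induct) (auto intro!: v_add_ge)

lemma v_sum_gt:
  "finite A \<Longrightarrow> L \<noteq> \<infinity> \<Longrightarrow> (\<And>i. i \<in> A \<Longrightarrow> L < v (f i)) \<Longrightarrow> L < v (sum f A)"
proof (induction A rule: finite_induct)
  case empty then show ?case by (simp add: less_le)
qed (simp add: v_add_gt)

lemma v_sum_eq_dominant:
  assumes "finite A" "i \<in> A" "v (f i) = L" "L \<noteq> \<infinity>" "\<And>j. j \<in> A \<Longrightarrow> j \<noteq> i \<Longrightarrow> L < v (f j)"
  shows "v (sum f A) = L"
proof -
  have "L < v (sum f (A - {i}))" using assms by (intro v_sum_gt) auto
  then show ?thesis using assms(1-3) v_add_eq_left by (simp add: sum.remove)
qed

abbreviation gv :: "'a poly \<Rightarrow> ereal" where "gv \<equiv> gauss_val v"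

lemma gauss_val_le_coeff: "gv f \<le> v (coeff f k)"
proof (cases "k \<le> degree f")
  case True then show ?thesis unfolding gauss_val_def by (intro Min_le) auto
qed (simp add: coeff_eq_0)

lemma gauss_val_attained: "\<exists>k. v (coeff f k) = gv f"
proof -
  have "gv f \<in> (\<lambda>i. v (coeff f i)) ` {..degree f}"
    unfolding gauss_val_def by (intro Min_in) auto
  then show ?thesis by auto
qed

lemma gauss_val_ge_iff: "L \<le> gv f \<longleftrightarrow> (\<forall>k. L \<le> v (coeff f k))"
  using gauss_val_le_coeff gauss_val_attained by (metis order_trans)

lemma gauss_val_gt_iff: "L < gv f \<longleftrightarrow> (\<forall>k. L < v (coeff f k))"
  using gauss_val_le_coeff gauss_val_attained by (metis order_less_le_trans)

lemma gauss_val_eq_infinity_iff: "gv f = \<infinity> \<longleftrightarrow> f = 0"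
  using gauss_val_ge_iff[of \<infinity> f] by (auto simp: v_eq_infinity_iff poly_eq_iff)

lemma gauss_val_zero [simp]: "gv 0 = \<infinity>"
  by (simp add: gauss_val_eq_infinity_iff)

lemma gauss_val_neq_minf [simp]: "gv f \<noteq> -\<infinity>"
  using gauss_val_attained[of f] v_neq_minf by metis

lemma gauss_val_finite: "f \<noteq> 0 \<Longrightarrow> \<exists>r. gv f = ereal r"
  using gauss_val_eq_infinity_iff[of f] by (cases "gv f") auto

lemma gauss_val_add_ge: "L \<le> gv f \<Longrightarrow> L \<le> gv g \<Longrightarrow> L \<le> gv (f + g)"
  by (auto simp: gauss_val_ge_iff intro!: v_add_ge)

lemma gauss_val_diff_ge: "L \<le> gv f \<Longrightarrow> L \<le> gv g \<Longrightarrow> L \<le> gv (f - g)"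
  by (auto simp: gauss_val_ge_iff intro!: v_diff_ge)

lemma gauss_val_add_gt: "L < gv f \<Longrightarrow> L < gv g \<Longrightarrow> L < gv (f + g)"
  by (auto simp: gauss_val_gt_iff intro!: v_add_gt)

lemma gauss_val_diff_gt: "L < gv f \<Longrightarrow> L < gv g \<Longrightarrow> L < gv (f - g)"
  by (auto simp: gauss_val_gt_iff intro!: v_diff_gt)

lemma gauss_val_uminus [simp]: "gv (- f) = gv f"
  by (metis gauss_val_ge_iff coeff_minus v_uminus order.antisym order.refl)

lemma gauss_val_add_eq_left:
  assumes "gv f < gv g"
  shows "gv (f + g) = gv f"
proof -
  obtain k where k: "v (coeff f k) = gv f" using gauss_val_attained by blast
  have "v (coeff f k) < v (coeff g k)" using assms k gauss_val_le_coeff[of g k] by simp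
  then have "v (coeff (f + g) k) = gv f" using k v_add_eq_left by simp
  moreover have "gv f \<le> gv (f + g)" using assms by (intro gauss_val_add_ge) auto
  ultimately show ?thesis using gauss_val_le_coeff[of "f + g" k] by simp
qed

lemma gauss_val_smult: "gv (smult c f) = v c + gv f"
proof -
  obtain k where k: "v (coeff f k) = gv f" using gauss_val_attained by blast
  have "v c + gv f \<le> gv (smult c f)"
    unfolding gauss_val_ge_iff by (auto simp: v_mult intro!: add_left_mono gauss_val_le_coeff)
  moreover have "gv (smult c f) \<le> v c + gv f"
    using gauss_val_le_coeff[of "smult c f" k] k by (simp add: v_mult)
  ultimately show ?thesis by simp
qed

lemma gauss_val_pCons_le: "gv (pCons a p) \<le> v a" "gv (pCons a p) \<le> gv p"
  using gauss_val_le_coeff[of "pCons a p" 0] gauss_val_le_coeff[of "pCons a p" "Suc k" for k]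
  by (simp_all add: gauss_val_ge_iff)

lemma last_minimal_coeff:
  assumes "f \<noteq> 0" "P k" "v (coeff f k) = gv f"
  obtains m where "P m" "v (coeff f m) = gv f" "\<And>j. P j \<Longrightarrow> m < j \<Longrightarrow> gv f < v (coeff f j)"
proof -
  define S where "S = {j. P j \<and> v (coeff f j) = gv f}"
  have "coeff f j \<noteq> 0" if "j \<in> S" for j
  proof
    assume "coeff f j = 0"
    then have "gv f = \<infinity>" using that by (simp add: S_def)
    then show False using assms(1) gauss_val_eq_infinity_iff by blast
  qed
  then have "S \<subseteq> {..degree f}" by (auto intro: le_degree)
  then have "finite S" by (rule finite_subset) simp
  moreover have "k \<in> S" using assms by (simp add: S_def)
  ultimately have "Max S \<in> S" and "\<And>j. j \<in> S \<Longrightarrow> j \<le> Max S"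
    using Max_in by auto
  moreover have "gv f < v (coeff f j)" if "P j" "Max S < j" for j
  proof -
    have "j \<notin> S" using that(2) \<open>\<And>j. j \<in> S \<Longrightarrow> j \<le> Max S\<close> leD by blast
    then have "v (coeff f j) \<noteq> gv f" using that(1) by (simp add: S_def)
    then show ?thesis using gauss_val_le_coeff[of f j] by simp
  qed
  ultimately show ?thesis using that[of "Max S"] by (simp add: S_def)
qed

lemma gauss_val_mult: "gv (f * g) = gv f + gv g"
proof (cases "f = 0 \<or> g = 0")
  case True
  then show ?thesis by (elim disjE) simp_all
next
  case False
  obtain k l where "v (coeff f k) = gv f" "v (coeff g l) = gv g"
    using gauss_val_attained by meson
  then obtain a b where a: "v (coeff f a) = gv f" and a_last: "\<And>i. a < i \<Longrightarrow> gv f < v (coeff f i)"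
    and b: "v (coeff g b) = gv g" and b_last: "\<And>j. b < j \<Longrightarrow> gv g < v (coeff g j)"
    using last_minimal_coeff[of f "\<lambda>_. True" k] last_minimal_coeff[of g "\<lambda>_. True" l] False
    by (metis (full_types))
  obtain rf rg where "gv f = ereal rf" "gv g = ereal rg" using False gauss_val_finite by meson
  then have fin: "\<bar>gv f\<bar> \<noteq> \<infinity>" "\<bar>gv g\<bar> \<noteq> \<infinity>" by simp_all
  have "v (coeff (f * g) (a + b)) = gv f + gv g"
    unfolding coeff_mult
  proof (rule v_sum_eq_dominant[where i = a])
    show "v (coeff f a * coeff g (a + b - a)) = gv f + gv g" using a b by (simp add: v_mult)
    show "gv f + gv g \<noteq> \<infinity>" using fin by auto
    fix i assume i: "i \<in> {..a + b}" "i \<noteq> a"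
    show "gv f + gv g < v (coeff f i * coeff g (a + b - i))"
    proof (cases "i < a")
      case True
      then have "gv g < v (coeff g (a + b - i))" using b_last by simp
      then show ?thesis using ereal_add_le_less[OF gauss_val_le_coeff _ fin(1)] by (simp add: v_mult)
    next
      case False
      then have "gv f < v (coeff f i)" using a_last i(2) by simp
      then show ?thesis
        using ereal_add_le_less[OF gauss_val_le_coeff _ fin(2)] by (simp add: v_mult add.commute)
    qed
  qed simp_all
  then have "gv (f * g) \<le> gv f + gv g" using gauss_val_le_coeff[of "f * g" "a + b"] by simp
  moreover have "gv f + gv g \<le> gv (f * g)"
    unfolding gauss_val_ge_iff coeff_mult
    by (auto intro!: v_sum_ge add_mono gauss_val_le_coeff simp: v_mult)
  ultimately show ?thesis by simp
qed

lemma gauss_val_power2: "gv (f ^ 2) = 2 * gv f"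
  by (cases "gv f") (auto simp: power2_eq_square gauss_val_mult)

lemma v_square_cross_coeff_ge: "v 2 + 2 * gv e \<le> v (square_cross_coeff e m)"
proof (induction e arbitrary: m rule: pCons_induct)
  case 0
  then show ?case by (simp add: square_cross_coeff_def)
next
  case (pCons a p)
  let ?e = "pCons a p"
  have ga: "gv ?e \<le> v a" and gp: "gv ?e \<le> gv p" by (rule gauss_val_pCons_le)+
  have "2 * gv ?e \<le> v a + v (coeff p k)" for k
    unfolding ereal_two_times using ga gp gauss_val_le_coeff[of p k] by (intro add_mono) auto
  then have mixed: "v 2 + 2 * gv ?e \<le> v (2 * a * coeff p k)" for k
    by (simp add: v_mult add.assoc add_left_mono)
  show ?case
  proof (cases m)
    case 0
    then show ?thesis by (simp add: square_cross_coeff_def square_pCons power2_eq_square)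
  next
    case (Suc k)
    show ?thesis
    proof (cases k)
      case 0
      then have "square_cross_coeff ?e m = 2 * a * coeff p 0"
        using Suc by (simp add: square_cross_coeff_def square_pCons numeral_mult_conv_smult)
      then show ?thesis using mixed by simp
    next
      case (Suc j)
      then have "square_cross_coeff ?e m = 2 * a * coeff p (Suc j) + square_cross_coeff p j"
        using \<open>m = Suc k\<close>
        by (simp add: square_cross_coeff_def square_pCons numeral_mult_conv_smult)
      moreover have "v 2 + 2 * gv ?e \<le> v 2 + 2 * gv p"
        using gp by (intro add_left_mono ereal_mult_left_mono) auto
      then have "v 2 + 2 * gv ?e \<le> v (square_cross_coeff p j)"
        using pCons.IH[of j] by simp
      ultimately show ?thesis using mixed by (simp add: v_add_ge)
    qed
  qed
qed

lemma gauss_val_attained_odd_0: "gauss_val_attained_odd v 0"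
  unfolding gauss_val_attained_odd_def by (intro exI[of _ 1]) simp

lemma gauss_val_attained_odd_add_iff:
  assumes "gv f < gv g"
  shows "gauss_val_attained_odd v (f + g) \<longleftrightarrow> gauss_val_attained_odd v f"
proof -
  have small: "gv f < v (coeff g k)" for k
    using assms gauss_val_le_coeff[of g k] by simp
  have "v (coeff (f + g) k) = gv f \<longleftrightarrow> v (coeff f k) = gv f" for k
  proof
    assume "v (coeff (f + g) k) = gv f"
    then show "v (coeff f k) = gv f"
      using v_add_eq_left[of "coeff (f + g) k" "- coeff g k"] small[of k] by simp
  qed (use v_add_eq_left small in simp)
  then show ?thesis
    unfolding gauss_val_attained_odd_def gauss_val_add_eq_left[OF assms] by simp
qed

lemma gauss_val_le_square_part:
  assumes "h = q ^ 2 + \<rho>" "gv h \<le> gv \<rho>"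
  shows "gv h \<le> gv (q ^ 2)"
proof -
  have "gv h \<le> gv (h - \<rho>)" using assms(2) by (intro gauss_val_diff_ge) auto
  then show ?thesis using assms(1) by simp
qed

lemma gauss_val_prod_square_diff_ge:
  assumes "finite I" "\<And>i. i \<in> I \<Longrightarrow> hs i = qs i ^ 2 + \<rho>s i"
    "\<And>i. i \<in> I \<Longrightarrow> gv (hs i) + c \<le> gv (\<rho>s i)" "0 \<le> c"
  shows "gv (\<Prod>i\<in>I. hs i) + c \<le> gv ((\<Prod>i\<in>I. hs i) - (\<Prod>i\<in>I. qs i) ^ 2)"
  using assms(1-3)
proof (induction I rule: finite_induct)
  case (insert a I)
  let ?H = "\<Prod>i\<in>I. hs i" and ?Q = "\<Prod>i\<in>I. qs i"
  have IH: "gv ?H + c \<le> gv (?H - ?Q ^ 2)" using insert by simp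
  have dec_a: "hs a = qs a ^ 2 + \<rho>s a" and bound_a: "gv (hs a) + c \<le> gv (\<rho>s a)"
    using insert by auto
  have le_c: "x \<le> x + c" for x using assms(4) by (simp add: add_increasing2)
  have "gv ?H \<le> gv (?Q ^ 2)"
    using gauss_val_le_square_part[of ?H ?Q "?H - ?Q ^ 2"] IH le_c[of "gv ?H"] by simp
  then have "(gv (hs a) + c) + gv ?H \<le> gv (\<rho>s a) + gv (?Q ^ 2)"
    using bound_a by (intro add_mono)
  then have "gv (hs a * ?H) + c \<le> gv (\<rho>s a * ?Q ^ 2)"
    by (simp add: gauss_val_mult ac_simps)
  moreover have "gv (hs a * ?H) + c \<le> gv (hs a * (?H - ?Q ^ 2))"
    using IH by (simp add: gauss_val_mult add.assoc add_left_mono)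
  moreover have "hs a * ?H - (qs a * ?Q) ^ 2 = hs a * (?H - ?Q ^ 2) + \<rho>s a * ?Q ^ 2"
    using dec_a by (simp add: power_mult_distrib algebra_simps)
  ultimately show ?case
    using insert.hyps by (simp add: gauss_val_add_ge)
qed simp

lemma gauss_val_dominant_coeff:
  assumes "dominant_coeff v p n"
  shows "gv p = v (coeff p n)"
proof -
  have "v (coeff p n) \<le> gv p"
    using assms unfolding gauss_val_ge_iff dominant_coeff_def by (metis order.refl less_imp_le)
  then show ?thesis using gauss_val_le_coeff[of p n] by simp
qed

lemma dominant_coeff_imp_nonzero: "dominant_coeff v p n \<Longrightarrow> p \<noteq> 0"
  by (auto simp: dominant_coeff_def dest: spec[of _ "Suc n"])

lemma dominant_coeff_attained_odd_iff:
  assumes "dominant_coeff v p n"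
  shows "gauss_val_attained_odd v p \<longleftrightarrow> odd n"
  using assms gauss_val_dominant_coeff[OF assms]
  by (auto simp: gauss_val_attained_odd_def dominant_coeff_def)

lemma v_coeff_mult_dominant_coeff_0:
  assumes "dominant_coeff v g 0" "v (coeff f k) = gv f" "f \<noteq> 0"
  shows "v (coeff (f * g) k) = gv f + gv g"
proof -
  have fin: "\<bar>gv f\<bar> \<noteq> \<infinity>" using assms(3) gauss_val_finite by fastforce
  have "gv g < \<infinity>"
    using assms(1) gauss_val_dominant_coeff[OF assms(1)] by (auto simp: dominant_coeff_def)
  show ?thesis
    unfolding coeff_mult
  proof (rule v_sum_eq_dominant[where i = k])
    show "v (coeff f k * coeff g (k - k)) = gv f + gv g"
      using assms(1,2) by (simp add: v_mult gauss_val_dominant_coeff)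
    show "gv f + gv g \<noteq> \<infinity>" using fin \<open>gv g < \<infinity>\<close> by auto
    fix i assume "i \<in> {..k}" "i \<noteq> k"
    then have "v (coeff g 0) < v (coeff g (k - i))" using assms(1) by (simp add: dominant_coeff_def)
    then show "gv f + gv g < v (coeff f i * coeff g (k - i))"
      using ereal_add_le_less[OF gauss_val_le_coeff _ fin] assms(1)
      by (simp add: v_mult gauss_val_dominant_coeff)
  qed simp_all
qed

lemma v_coeff_mult_gt:
  assumes "\<And>i. i \<le> k \<Longrightarrow> A < v (coeff f i)" "\<bar>A\<bar> \<noteq> \<infinity>" "g \<noteq> 0"
  shows "A + gv g < v (coeff (f * g) k)"
  unfolding coeff_mult
proof (rule v_sum_gt)
  show "A + gv g \<noteq> \<infinity>" using assms(2,3) gauss_val_eq_infinity_iff by (cases A) auto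
  fix i assume "i \<in> {..k}"
  have "\<bar>gv g\<bar> \<noteq> \<infinity>" using assms(3) gauss_val_finite by fastforce
  then have "gv g + A < v (coeff g (k - i)) + v (coeff f i)"
    using \<open>i \<in> {..k}\<close> assms(1) by (intro ereal_add_le_less gauss_val_le_coeff) auto
  then have "A + gv g < v (coeff f i) + v (coeff g (k - i))" by (simp add: add.commute)
  then show "A + gv g < v (coeff f i * coeff g (k - i))" by (simp add: v_mult)
qed simp

lemma gauss_val_remainder:
  assumes "h = q ^ 2 + \<rho>" "h \<noteq> 0"
  shows "gv \<rho> = gv h + dec_t v q \<rho>"
proof -
  obtain r where "gv h = ereal r" using assms(2) gauss_val_finite by blast
  then show ?thesis using assms(1) by (cases "gv \<rho>") (simp_all add: dec_t_def)
qed

lemma dec_t_prod_ge: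
  assumes "finite I" "\<And>i. i \<in> I \<Longrightarrow> hs i = qs i ^ 2 + \<rho>s i" "\<And>i. i \<in> I \<Longrightarrow> hs i \<noteq> 0"
    "\<And>i. i \<in> I \<Longrightarrow> c \<le> dec_t v (qs i) (\<rho>s i)" "0 \<le> c"
  shows "c \<le> dec_t v (\<Prod>i\<in>I. qs i) ((\<Prod>i\<in>I. hs i) - (\<Prod>i\<in>I. qs i) ^ 2)"
proof -
  have bound: "gv (hs i) + c \<le> gv (\<rho>s i)" if "i \<in> I" for i
    using assms(2-4)[OF that] gauss_val_remainder by (simp add: add_left_mono)
  have "gv (\<Prod>i\<in>I. hs i) + c \<le> gv ((\<Prod>i\<in>I. hs i) - (\<Prod>i\<in>I. qs i) ^ 2)"
    by (rule gauss_val_prod_square_diff_ge[OF assms(1,2) bound assms(5)])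
  moreover have "(\<Prod>i\<in>I. hs i) \<noteq> 0" using assms(1,3) by simp
  ultimately show ?thesis
    using gauss_val_remainder[of "\<Prod>i\<in>I. hs i" "\<Prod>i\<in>I. qs i"] gauss_val_finite
    by (fastforce simp: ereal_add_le_add_iff)
qed

end

locale alg_closed_valuation = valuation +
  assumes alg_closed: "alg_closed_field TYPE('a)"
begin

lemma exists_sqrt: "\<exists>y::'a. y ^ 2 = x"
proof -
  have "\<exists>y. poly [:-x, 0, 1:] y = 0"
    using alg_closed unfolding alg_closed_field_def by (metis degree_pCons_eq_if one_le_numeral
      one_neq_zero pCons_eq_0_iff numeral_2_eq_2 One_nat_def order.refl)
  then show ?thesis by (auto simp: power2_eq_square algebra_simps)
qed

lemma v_lead_coeff_less_if_roots_pos: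
  assumes "p \<noteq> 0" "\<And>s. poly p s = 0 \<Longrightarrow> 0 < v s" "k < degree p"
  shows "v (lead_coeff p) < v (coeff p k)"
  using assms
proof (induction "degree p" arbitrary: p k)
  case (Suc n)
  obtain s where s: "poly p s = 0"
    using alg_closed Suc.hyps(2) unfolding alg_closed_field_def by (metis le_add1 plus_1_eq_Suc)
  then obtain p' where p: "p = [:-s, 1:] * p'"
    by (metis dvdE dvd_iff_poly_eq_0 minus_minus)
  have "p' \<noteq> 0" using p Suc.prems(1) by auto
  then have "degree ([:-s, 1:] * p') = degree [:-s, 1:] + degree p'"
    by (intro degree_mult_eq) simp_all
  then have deg: "degree p = Suc (degree p')" using p by simp
  have IH: "v (lead_coeff p') < v (coeff p' j)" if "j < degree p'" for j
    using Suc.hyps Suc.prems(2) \<open>p' \<noteq> 0\<close> deg p that by (auto intro!: Suc.hyps(1))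
  have "lead_coeff ([:-s, 1:] * p') = lead_coeff [:-s, 1:] * lead_coeff p'"
    by (rule lead_coeff_mult)
  then have lc: "lead_coeff p = lead_coeff p'" using p by simp
  obtain L where L: "v (lead_coeff p') = ereal L" using v_finite \<open>p' \<noteq> 0\<close> by fastforce
  have "v (lead_coeff p') \<le> v (coeff p' k)"
    using IH[of k] Suc.prems(3) deg by (cases "k = degree p'") auto
  then have "v (lead_coeff p') < v (- s * coeff p' k)"
    using Suc.prems(2)[OF s] L by (cases "v s"; cases "v (coeff p' k)") (auto simp: v_mult)
  moreover have "v (lead_coeff p') < v (case k of 0 \<Rightarrow> 0 | Suc j \<Rightarrow> coeff p' j)"
    using IH Suc.prems(3) deg L by (cases k) auto
  moreover have "coeff p k = - s * coeff p' k + (case k of 0 \<Rightarrow> 0 | Suc j \<Rightarrow> coeff p' j)"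
    unfolding p by (simp add: mult_pCons_left coeff_pCons split: nat.splits)
  ultimately show ?case unfolding lc by (metis v_add_gt)
qed simp

lemma dominant_coeff_degree_if_roots_pos:
  assumes "p \<noteq> 0" "\<And>s. poly p s = 0 \<Longrightarrow> 0 < v s"
  shows "dominant_coeff v p (degree p)"
  unfolding dominant_coeff_def
proof (intro allI impI)
  fix k assume "k \<noteq> degree p"
  then consider "k < degree p" | "degree p < k" by linarith
  then show "v (coeff p (degree p)) < v (coeff p k)"
  proof cases
    case 2
    then show ?thesis using assms(1) v_finite[of "lead_coeff p"] by (auto simp: coeff_eq_0)
  qed (use v_lead_coeff_less_if_roots_pos assms in auto)
qed

lemma dominant_coeff_0_if_roots_neg:
  assumes "p \<noteq> 0" "\<And>s. poly p s = 0 \<Longrightarrow> v s < 0"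
  shows "dominant_coeff v p 0"
proof -
  have p0: "coeff p 0 \<noteq> 0" using assms(2)[of 0] by (auto simp: poly_0_coeff_0)
  define r where "r = reflect_poly p"
  have "r \<noteq> 0" "degree r = degree p" "lead_coeff r = coeff p 0"
    using p0 assms(1) by (simp_all add: r_def coeff_reflect_poly)
  have "0 < v s" if "poly r s = 0" for s
  proof -
    have "s \<noteq> 0" using that p0 by (auto simp: r_def poly_0_coeff_0 coeff_reflect_poly)
    then have "poly p (inverse s) = 0" using that by (simp add: r_def poly_reflect_poly_nz)
    then have "v (inverse s) < 0" by (rule assms(2))
    moreover have "v s + v (inverse s) = 0" using \<open>s \<noteq> 0\<close> v_mult[of s "inverse s"] by simp
    ultimately show ?thesis by (cases "v s"; cases "v (inverse s)") auto
  qed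
  then have dom: "dominant_coeff v r (degree p)"
    using dominant_coeff_degree_if_roots_pos[OF \<open>r \<noteq> 0\<close>] \<open>degree r = degree p\<close> by simp
  show ?thesis
    unfolding dominant_coeff_def
  proof (intro allI impI)
    fix k :: nat assume "k \<noteq> 0"
    show "v (coeff p 0) < v (coeff p k)"
    proof (cases "k \<le> degree p")
      case True
      then have "coeff p k = coeff r (degree p - k)" by (simp add: r_def coeff_reflect_poly)
      then show ?thesis
        using dom \<open>k \<noteq> 0\<close> True \<open>lead_coeff r = coeff p 0\<close> \<open>degree r = degree p\<close>
        by (auto simp: dominant_coeff_def)
    qed (use p0 v_finite[of "coeff p 0"] in \<open>auto simp: coeff_eq_0\<close>)
  qed
qed

end

locale dyadic_valuation = alg_closed_valuation v for v :: "'a::field_char_0 \<Rightarrow> ereal" +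
  assumes v_two_pos: "0 < v 2"
begin

lemma v_two_finite: "\<bar>v 2\<bar> \<noteq> \<infinity>"
  using v_eq_infinity_iff[of 2] by (cases "v 2") auto

lemma less_v_two_add: "a \<le> b \<Longrightarrow> \<bar>a\<bar> \<noteq> \<infinity> \<Longrightarrow> a < v 2 + b"
  using v_two_pos v_two_finite by (cases a; cases b; cases "v 2") auto

lemma v_square_cross_coeff_gt: "L \<le> 2 * gv e \<Longrightarrow> \<bar>L\<bar> \<noteq> \<infinity> \<Longrightarrow> L < v (square_cross_coeff e m)"
  by (rule order_less_le_trans[OF less_v_two_add v_square_cross_coeff_ge])

lemma v_coeff_square_odd_gt: "L \<le> 2 * gv e \<Longrightarrow> \<bar>L\<bar> \<noteq> \<infinity> \<Longrightarrow> odd k \<Longrightarrow> L < v (coeff (e ^ 2) k)"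
  using v_square_cross_coeff_gt by (simp add: coeff_square)

lemma square_approx_if_not_attained_odd:
  assumes "\<not> gauss_val_attained_odd v f"
  shows "\<exists>e. gv f < gv (f - e ^ 2)"
proof -
  have "f \<noteq> 0" using assms gauss_val_attained_odd_0 by blast
  then obtain r where r: "gv f = ereal r" using gauss_val_finite by blast
  define sq_root where "sq_root x = (SOME y. y ^ 2 = x)" for x :: 'a
  have sq_root: "sq_root x ^ 2 = x" for x unfolding sq_root_def using exists_sqrt by (rule someI_ex)
  define e where "e = Poly (map (\<lambda>j. sq_root (coeff f (2 * j))) [0..<Suc (degree f)])"
  have coeff_e: "coeff e j = sq_root (coeff f (2 * j))" for j
  proof (cases "j < Suc (degree f)")
    case False
    then have "coeff f (2 * j) = 0" by (intro coeff_eq_0) auto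
    then show ?thesis using False sq_root[of 0] by (simp add: e_def nth_default_def del: upt_Suc)
  qed (simp add: e_def nth_default_def del: upt_Suc)
  have "gv f \<le> 2 * gv e"
  proof -
    obtain j where "v (coeff e j) = gv e" using gauss_val_attained by blast
    then have "2 * gv e = v (coeff f (2 * j))"
      using v_power2[of "coeff e j"] sq_root[of "coeff f (2 * j)"] coeff_e[of j] by simp
    then show ?thesis using gauss_val_le_coeff by simp
  qed
  then have cross: "gv f < v (square_cross_coeff e k)" for k
    using v_square_cross_coeff_gt r by simp
  have "gv f < v (coeff (f - e ^ 2) k)" for k
  proof (cases "even k")
    case True
    then have "coeff (f - e ^ 2) k = - square_cross_coeff e k"
      using sq_root coeff_e by (simp add: coeff_square)
    then show ?thesis using cross by simp
  next
    case False
    then have "gv f < v (coeff f k)"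
      using assms gauss_val_le_coeff[of f k] by (auto simp: gauss_val_attained_odd_def)
    then show ?thesis using False cross by (simp add: coeff_square v_diff_gt)
  qed
  then show ?thesis unfolding gauss_val_gt_iff by blast
qed

lemma gauss_val_square_of_approx:
  assumes "gv f < gv (f - e ^ 2)"
  shows "2 * gv e = gv f"
proof -
  have "gv f < gv (- (f - e ^ 2))" using assms by (simp only: gauss_val_uminus)
  then have "gv (f + - (f - e ^ 2)) = gv f" by (rule gauss_val_add_eq_left)
  then show ?thesis by (simp add: gauss_val_power2)
qed

lemma not_attained_odd_iff_square_approx:
  "\<not> gauss_val_attained_odd v f \<longleftrightarrow> (\<exists>e. gv f < gv (f - e ^ 2))"
proof
  assume "\<exists>e. gv f < gv (f - e ^ 2)"
  then obtain e where e: "gv f < gv (f - e ^ 2)" by blast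
  then have "\<bar>gv f\<bar> \<noteq> \<infinity>" by auto
  have "gv f < v (coeff f k)" if "odd k" for k
  proof -
    have "gv f < v (coeff (e ^ 2) k)"
      using v_coeff_square_odd_gt gauss_val_square_of_approx[OF e] \<open>\<bar>gv f\<bar> \<noteq> \<infinity>\<close> that by simp
    moreover have "gv f < v (coeff (f - e ^ 2) k)" using e gauss_val_gt_iff by blast
    moreover have "coeff f k = coeff (e ^ 2) k + coeff (f - e ^ 2) k" by simp
    ultimately show ?thesis by (metis v_add_gt)
  qed
  then show "\<not> gauss_val_attained_odd v f"
    by (metis gauss_val_attained_odd_def order_less_irrefl)
qed (rule square_approx_if_not_attained_odd)

lemma v_square_cross_coeff_mult_gt:
  assumes "f \<noteq> 0" "Q \<noteq> 0"
  shows "gv f + 2 * gv Q < v (square_cross_coeff Q m * coeff f i)"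
proof -
  obtain rf rq where rf: "gv f = ereal rf" and rq: "gv Q = ereal rq"
    using assms gauss_val_finite by meson
  then have "2 * gv Q < v (square_cross_coeff Q m)" by (intro v_square_cross_coeff_gt) auto
  then have "gv f + 2 * gv Q < v (coeff f i) + v (square_cross_coeff Q m)"
    using rf by (intro ereal_add_le_less gauss_val_le_coeff) auto
  then show ?thesis by (simp add: v_mult add.commute)
qed

lemma v_coeff_square_mult_off_diagonal:
  assumes "f \<noteq> 0" "Q \<noteq> 0" "odd k" and k_last: "\<And>i. odd i \<Longrightarrow> k < i \<Longrightarrow> gv f < v (coeff f i)"
    and j_last: "\<And>i. j < i \<Longrightarrow> gv Q < v (coeff Q i)" and "m \<noteq> 2 * j"
  shows "gv f + 2 * gv Q < v (coeff (Q ^ 2) m * coeff f (k + 2 * j - m))"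
proof -
  obtain rf rq where rf: "gv f = ereal rf" and rq: "gv Q = ereal rq"
    using assms(1,2) gauss_val_finite by meson
  have "gv f + 2 * gv Q < v ((if even m then coeff Q (m div 2) ^ 2 else 0) * coeff f (k + 2 * j - m))"
  proof (cases "even m")
    case True
    then obtain i where m: "m = 2 * i" by blast
    consider "j < i" | "i < j" using \<open>m \<noteq> 2 * j\<close> m by linarith
    then show ?thesis
    proof cases
      case 1
      then have "gv Q < v (coeff Q i)" by (rule j_last)
      then have "2 * gv Q < v (coeff Q i ^ 2)" using rq by (cases "v (coeff Q i)") (auto simp: v_power2)
      then have "gv f + 2 * gv Q < v (coeff f (k + 2 * j - m)) + v (coeff Q i ^ 2)"
        using rf by (intro ereal_add_le_less gauss_val_le_coeff) auto
      then show ?thesis using m by (simp add: v_mult add.commute)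
    next
      case 2
      then have "gv f < v (coeff f (k + 2 * j - m))" using \<open>odd k\<close> m by (intro k_last) auto
      moreover have "2 * gv Q \<le> v (coeff Q i ^ 2)"
        using gauss_val_le_coeff[of Q i] by (simp add: v_power2 ereal_mult_left_mono)
      ultimately have "2 * gv Q + gv f < v (coeff Q i ^ 2) + v (coeff f (k + 2 * j - m))"
        using rq by (intro ereal_add_le_less) auto
      then show ?thesis using m by (simp add: v_mult add.commute)
    qed
  qed (simp add: rf rq)
  moreover have "coeff (Q ^ 2) m * coeff f (k + 2 * j - m)
    = (if even m then coeff Q (m div 2) ^ 2 else 0) * coeff f (k + 2 * j - m)
      + square_cross_coeff Q m * coeff f (k + 2 * j - m)"
    by (simp only: coeff_square distrib_right)
  ultimately show ?thesis using v_square_cross_coeff_mult_gt[OF assms(1,2)] by (simp add: v_add_gt)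
qed

lemma gauss_val_attained_odd_mult_square:
  assumes "gauss_val_attained_odd v f"
  shows "gauss_val_attained_odd v (f * Q ^ 2)"
proof (cases "f = 0 \<or> Q = 0")
  case True
  then show ?thesis using gauss_val_attained_odd_0 by auto
next
  case False
  obtain k0 j0 where "odd k0" "v (coeff f k0) = gv f" "v (coeff Q j0) = gv Q"
    using assms gauss_val_attained unfolding gauss_val_attained_odd_def by meson
  then obtain k j where k: "odd k" "v (coeff f k) = gv f"
    and k_last: "\<And>i. odd i \<Longrightarrow> k < i \<Longrightarrow> gv f < v (coeff f i)"
    and j: "v (coeff Q j) = gv Q" and j_last: "\<And>i. j < i \<Longrightarrow> gv Q < v (coeff Q i)"
    using last_minimal_coeff[of f odd k0] last_minimal_coeff[of Q "\<lambda>_. True" j0] False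
    by (metis (full_types))
  txt \<open>With \<open>k\<close>, \<open>j\<close> the last such indices, \<open>coeff f k * coeff Q j ^ 2\<close> is the unique
    term of minimal valuation in the coefficient of degree \<open>k + 2 j\<close> of \<open>Q\<^sup>2 * f\<close>.\<close>
  obtain rf rq where "gv f = ereal rf" "gv Q = ereal rq" using False gauss_val_finite by meson
  then have "\<bar>gv f + 2 * gv Q\<bar> \<noteq> \<infinity>" by simp
  have "v (coeff (Q ^ 2 * f) (k + 2 * j)) = gv f + 2 * gv Q"
    unfolding coeff_mult
  proof (rule v_sum_eq_dominant[where i = "2 * j"])
    have "v (coeff Q j ^ 2 * coeff f k) = gv f + 2 * gv Q"
      using j k by (simp add: v_mult v_power2 add.commute)
    moreover have "gv f + 2 * gv Q < v (square_cross_coeff Q (2 * j) * coeff f k)"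
      using v_square_cross_coeff_mult_gt False by blast
    moreover have "coeff (Q ^ 2) (2 * j) * coeff f k
        = coeff Q j ^ 2 * coeff f k + square_cross_coeff Q (2 * j) * coeff f k"
      by (simp add: coeff_square distrib_right)
    ultimately show "v (coeff (Q ^ 2) (2 * j) * coeff f (k + 2 * j - 2 * j)) = gv f + 2 * gv Q"
      using v_add_eq_left by simp
  qed (use v_coeff_square_mult_off_diagonal[OF _ _ k(1) k_last j_last] False
      \<open>\<bar>gv f + 2 * gv Q\<bar> \<noteq> \<infinity>\<close> in auto)
  then have "v (coeff (f * Q ^ 2) (k + 2 * j)) = gv (f * Q ^ 2)"
    by (simp add: gauss_val_mult gauss_val_power2 mult.commute)
  then show ?thesis
    unfolding gauss_val_attained_odd_def using k(1) by (intro exI[of _ "k + 2 * j"]) simp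
qed

lemma gauss_val_high_part_ge:
  assumes dec: "h = (a + b) ^ 2 + \<rho>" and deg_a: "degree a \<le> m" and deg_h: "degree h \<le> 2 * m + 1"
    and b_low: "\<And>k. k \<le> m \<Longrightarrow> coeff b k = 0" and c: "c \<le> gv \<rho>" "c \<le> 2 * (v 2 + gv a)"
  shows "c \<le> 2 * gv b"
proof (rule ccontr)
  assume "\<not> c \<le> 2 * gv b"
  then have b_small: "2 * gv b < c" by simp
  then have fin: "\<bar>2 * gv b\<bar> \<noteq> \<infinity>" by (cases "gv b") auto
  obtain j where j: "v (coeff b j) = gv b" using gauss_val_attained by blast
  then have "coeff b j \<noteq> 0" using b_small by auto
  then have "m < j" using b_low by (meson not_le)
  then have "degree h < 2 * j" "degree (a ^ 2) < 2 * j"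
    using degree_power_le[of a 2] deg_a deg_h by auto
  then have "coeff h (2 * j) = 0" "coeff (a ^ 2) (2 * j) = 0" by (simp_all add: coeff_eq_0)
  then have "coeff ((a + b) ^ 2) (2 * j) = - coeff \<rho> (2 * j)"
    using dec by (simp add: eq_neg_iff_add_eq_0)
  then have "c \<le> v (coeff ((a + b) ^ 2) (2 * j))" using c(1) gauss_val_le_coeff[of \<rho> "2 * j"] by simp
  have "(a + b) ^ 2 = a ^ 2 + smult 2 (a * b) + b ^ 2"
    by (simp add: power2_sum numeral_mult_conv_smult add_ac)
  then have split: "coeff ((a + b) ^ 2) (2 * j)
      = coeff b j ^ 2 + (square_cross_coeff b (2 * j) + coeff (smult 2 (a * b)) (2 * j))"
    using \<open>coeff (a ^ 2) (2 * j) = 0\<close> by (simp add: coeff_square[of b] add_ac)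
  have "2 * gv b < gv b + (v 2 + gv a)"
    using b_small c(2) fin by (intro ereal_less_add_halves) auto
  then have "2 * gv b < v (coeff (smult 2 (a * b)) (2 * j))"
    using gauss_val_le_coeff[of "smult 2 (a * b)" "2 * j"]
    by (simp add: gauss_val_smult gauss_val_mult ac_simps)
  then have "2 * gv b < v (square_cross_coeff b (2 * j) + coeff (smult 2 (a * b)) (2 * j))"
    using v_square_cross_coeff_gt[OF order.refl fin] by (intro v_add_gt)
  then have "v (coeff ((a + b) ^ 2) (2 * j)) = 2 * gv b"
    unfolding split using j by (simp add: v_power2 v_add_eq_left)
  then show False using b_small \<open>c \<le> v (coeff ((a + b) ^ 2) (2 * j))\<close> by simp
qed

lemma exists_truncated_square_part:
  assumes dec: "h = q ^ 2 + \<rho>" and q: "gv h \<le> 2 * gv q"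
    and c: "c \<le> gv \<rho>" "c \<le> gv h + 2 * v 2"
  shows "\<exists>a. degree a \<le> degree h div 2 \<and> c \<le> gv (h - a ^ 2)"
proof -
  define m where "m = degree h div 2"
  define a where "a = poly_cutoff (Suc m) q"
  define b where "b = q - a"
  have coeff_a: "coeff a k = (if k \<le> m then coeff q k else 0)" for k
    by (simp add: a_def coeff_poly_cutoff)
  have deg_a: "degree a \<le> m" by (rule degree_le) (simp add: coeff_a)
  have "gv q \<le> gv a" unfolding gauss_val_ge_iff using gauss_val_le_coeff[of q] by (simp add: coeff_a)
  then have "2 * (v 2 + gv q) \<le> 2 * (v 2 + gv a)" by (intro ereal_mult_left_mono add_left_mono) auto
  moreover have "c \<le> 2 * (v 2 + gv q)"
    using c(2) ereal_add_two_times_le[OF q, of "v 2"] by (simp add: add.commute)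
  ultimately have c_a: "c \<le> 2 * (v 2 + gv a)" by simp
  have q_split: "q = a + b" by (simp add: b_def)
  have c_b: "c \<le> 2 * gv b"
    by (rule gauss_val_high_part_ge[OF dec[unfolded q_split] deg_a _ _ c(1) c_a])
      (auto simp: m_def b_def coeff_a)
  have "c \<le> gv b + (v 2 + gv a)" using c_b c_a by (rule ereal_le_add_halves)
  then have "c \<le> gv (smult 2 (a * b))" by (simp add: gauss_val_smult gauss_val_mult ac_simps)
  moreover have "h - a ^ 2 = \<rho> + smult 2 (a * b) + b ^ 2"
    using dec unfolding q_split by (simp add: power2_sum numeral_mult_conv_smult)
  ultimately have "c \<le> gv (h - a ^ 2)"
    using c(1) c_b by (simp add: gauss_val_add_ge gauss_val_power2)
  then show ?thesis using deg_a m_def by blast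
qed

lemma gauss_val_less_double_cross:
  assumes "gv h \<le> 2 * gv q" "b < gv h + 2 * v 2" "b \<le> 2 * gv e" "\<bar>b\<bar> \<noteq> \<infinity>"
  shows "b < gv (2 * q * e)"
proof -
  have "b < 2 * (v 2 + gv q)"
    using assms(2) ereal_add_two_times_le[OF assms(1), of "v 2"] by (simp add: add.commute)
  then have "b < gv e + (v 2 + gv q)" using assms(3,4) by (intro ereal_less_add_halves)
  moreover have "gv (2 * q * e) = v 2 + gv q + gv e"
    by (simp add: numeral_mult_conv_smult gauss_val_smult gauss_val_mult add.assoc)
  ultimately show ?thesis by (simp add: ac_simps)
qed

lemma better_dec_imp_not_attained_odd:
  assumes dec: "h = q ^ 2 + \<rho>" and dec': "h = q' ^ 2 + \<rho>'"
    and t: "gv h \<le> gv \<rho>" "gv \<rho> < gv h + 2 * v 2" and better: "gv \<rho> < gv \<rho>'"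
  shows "\<not> gauss_val_attained_odd v \<rho>"
proof -
  have q: "gv h \<le> 2 * gv q" using gauss_val_le_square_part[OF dec t(1)] by (simp add: gauss_val_power2)
  have fin: "\<bar>gv \<rho>\<bar> \<noteq> \<infinity>" using t by auto
  define d where "d = q' - q"
  have "\<rho> = (q + d) ^ 2 + \<rho>' - q ^ 2" using dec dec' by (simp add: d_def)
  then have \<rho>: "\<rho> = d ^ 2 + (\<rho>' + 2 * q * d)"
    by (simp add: power2_sum algebra_simps)
  have d: "gv \<rho> \<le> 2 * gv d"
  proof (rule ccontr)
    assume "\<not> gv \<rho> \<le> 2 * gv d"
    then have d_small: "2 * gv d < gv \<rho>" by simp
    then have "\<bar>2 * gv d\<bar> \<noteq> \<infinity>" using fin by (cases "gv d") auto
    then have "2 * gv d < gv (2 * q * d)"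
      using d_small t(2) q by (intro gauss_val_less_double_cross) auto
    then have "gv (d ^ 2 + 2 * q * d) = 2 * gv d"
      by (simp add: gauss_val_add_eq_left gauss_val_power2)
    moreover have "gv (\<rho> + - \<rho>') = gv \<rho>" using better by (intro gauss_val_add_eq_left) simp
    ultimately show False using \<rho> d_small by (simp add: algebra_simps)
  qed
  have "gv \<rho> < gv (\<rho>' + 2 * q * d)"
    using better gauss_val_less_double_cross[OF q t(2) d fin] by (rule gauss_val_add_gt)
  then have "gv \<rho> < gv (\<rho> - d ^ 2)" using \<rho> by simp
  then show ?thesis using not_attained_odd_iff_square_approx by blast
qed

lemma not_attained_odd_imp_better_dec:
  assumes dec: "h = q ^ 2 + \<rho>" and t: "gv h \<le> gv \<rho>" "gv \<rho> < gv h + 2 * v 2"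
    and not_odd: "\<not> gauss_val_attained_odd v \<rho>"
  shows "\<exists>a. part_square_dec h a (h - a ^ 2) \<and> gv \<rho> < gv (h - a ^ 2)"
proof -
  have q: "gv h \<le> 2 * gv q" using gauss_val_le_square_part[OF dec t(1)] by (simp add: gauss_val_power2)
  have fin: "\<bar>gv \<rho>\<bar> \<noteq> \<infinity>" using t by auto
  obtain e where e: "gv \<rho> < gv (\<rho> - e ^ 2)"
    using not_odd not_attained_odd_iff_square_approx by blast
  then have e2: "2 * gv e = gv \<rho>" by (rule gauss_val_square_of_approx)
  define \<rho>1 where "\<rho>1 = \<rho> - e ^ 2 - 2 * q * e"
  have dec1: "h = (q + e) ^ 2 + \<rho>1"
    using dec by (simp add: \<rho>1_def power2_sum algebra_simps)
  have "gv \<rho> < gv \<rho>1"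
    using e gauss_val_less_double_cross[OF q t(2) _ fin] e2 by (simp add: \<rho>1_def gauss_val_diff_gt)
  have "gv h \<le> 2 * min (gv q) (gv e)" using q t(1) e2 by (simp add: min_def)
  also have "\<dots> \<le> 2 * gv (q + e)" by (intro ereal_mult_left_mono gauss_val_add_ge) auto
  finally have q1: "gv h \<le> 2 * gv (q + e)" .
  obtain a where "degree a \<le> degree h div 2" and a: "min (gv \<rho>1) (gv h + 2 * v 2) \<le> gv (h - a ^ 2)"
    using exists_truncated_square_part[OF dec1 q1, of "min (gv \<rho>1) (gv h + 2 * v 2)"] by auto
  then have "part_square_dec h a (h - a ^ 2)" by (simp add: part_square_dec_def)
  moreover have "gv \<rho> < min (gv \<rho>1) (gv h + 2 * v 2)" using \<open>gv \<rho> < gv \<rho>1\<close> t(2) by simp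
  then have "gv \<rho> < gv (h - a ^ 2)" using a by (rule order_less_le_trans)
  ultimately show ?thesis by blast
qed

lemma good_dec_iff:
  assumes dec: "h = q ^ 2 + \<rho>" and "h \<noteq> 0" and t: "0 \<le> dec_t v q \<rho>"
  shows "good_dec v h q \<rho> \<longleftrightarrow> 2 * v 2 \<le> dec_t v q \<rho> \<or> gauss_val_attained_odd v \<rho>"
proof (cases "2 * v 2 \<le> dec_t v q \<rho>")
  case False
  obtain r where r: "gv h = ereal r" using \<open>h \<noteq> 0\<close> gauss_val_finite by blast
  then have fin: "\<bar>gv h\<bar> \<noteq> \<infinity>" by simp
  have t_eq: "dec_t v q' \<rho>' = gv \<rho>' - gv h" if "h = q' ^ 2 + \<rho>'" for q' \<rho>'
    using that by (simp add: dec_t_def)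
  have t': "gv h \<le> gv \<rho>" "gv \<rho> < gv h + 2 * v 2"
    using t False fin by (simp_all add: t_eq[OF dec] ereal_le_minus ereal_minus_less add.commute)
  have better_iff: "dec_t v q \<rho> < dec_t v q' \<rho>' \<longleftrightarrow> gv \<rho> < gv \<rho>'"
    if "h = q' ^ 2 + \<rho>'" for q' \<rho>'
    unfolding t_eq[OF dec] t_eq[OF that] r by (cases "gv \<rho>"; cases "gv \<rho>'") auto
  have "good_dec v h q \<rho> \<longleftrightarrow>
      \<not> (\<exists>q' \<rho>'. part_square_dec h q' \<rho>' \<and> dec_t v q \<rho> < dec_t v q' \<rho>')"
    using False dec by (auto simp: good_dec_def)
  also have "\<dots> \<longleftrightarrow> gauss_val_attained_odd v \<rho>"
  proof
    assume no_better: "\<not> (\<exists>q' \<rho>'. part_square_dec h q' \<rho>' \<and> dec_t v q \<rho> < dec_t v q' \<rho>')"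
    show "gauss_val_attained_odd v \<rho>"
    proof (rule ccontr)
      assume "\<not> gauss_val_attained_odd v \<rho>"
      then obtain a where "part_square_dec h a (h - a ^ 2)" "gv \<rho> < gv (h - a ^ 2)"
        using not_attained_odd_imp_better_dec[OF dec t'] by blast
      then show False using no_better better_iff[of a "h - a ^ 2"] by auto
    qed
  next
    assume "gauss_val_attained_odd v \<rho>"
    then show "\<not> (\<exists>q' \<rho>'. part_square_dec h q' \<rho>' \<and> dec_t v q \<rho> < dec_t v q' \<rho>')"
      using better_dec_imp_not_attained_odd[OF dec _ t'] better_iff
      by (auto simp: part_square_dec_def)
  qed
  finally show ?thesis using False by simp
qed (simp add: good_dec_def dec)

lemma gauss_val_attained_odd_mult_square_iff:
  assumes "Q \<noteq> 0"
  shows "gauss_val_attained_odd v (f * Q ^ 2) \<longleftrightarrow> gauss_val_attained_odd v f"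
proof
  assume "gauss_val_attained_odd v (f * Q ^ 2)"
  show "gauss_val_attained_odd v f"
  proof (rule ccontr)
    assume "\<not> gauss_val_attained_odd v f"
    then obtain e where e: "gv f < gv (f - e ^ 2)" using not_attained_odd_iff_square_approx by blast
    obtain r where "gv (Q ^ 2) = ereal r" using assms gauss_val_finite by fastforce
    then have "ereal r + gv f < ereal r + gv (f - e ^ 2)" using e by (intro ereal_less_add) auto
    then have "gv (f * Q ^ 2) < gv ((f - e ^ 2) * Q ^ 2)"
      using \<open>gv (Q ^ 2) = ereal r\<close> by (simp add: gauss_val_mult add.commute)
    then have "gv (f * Q ^ 2) < gv (f * Q ^ 2 - (e * Q) ^ 2)"
      by (simp add: power_mult_distrib algebra_simps)
    then show False
      using \<open>gauss_val_attained_odd v (f * Q ^ 2)\<close> not_attained_odd_iff_square_approx by blast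
  qed
qed (rule gauss_val_attained_odd_mult_square)

lemma dec_t_mult_of_strict_min:
  assumes dec1: "h1 = q1 ^ 2 + \<rho>1" and dec2: "h2 = q2 ^ 2 + \<rho>2" and "h1 \<noteq> 0" "h2 \<noteq> 0"
    and t1: "0 \<le> dec_t v q1 \<rho>1" and less: "dec_t v q1 \<rho>1 < dec_t v q2 \<rho>2"
  shows "dec_t v (q1 * q2) (h1 * h2 - (q1 * q2) ^ 2) = dec_t v q1 \<rho>1"
    and "good_dec v (h1 * h2) (q1 * q2) (h1 * h2 - (q1 * q2) ^ 2) \<longleftrightarrow> good_dec v h1 q1 \<rho>1"
proof -
  define t where "t = dec_t v q1 \<rho>1"
  define \<rho> where "\<rho> = h1 * h2 - (q1 * q2) ^ 2"
  obtain a1 a2 where a1: "gv h1 = ereal a1" and a2: "gv h2 = ereal a2"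
    using \<open>h1 \<noteq> 0\<close> \<open>h2 \<noteq> 0\<close> gauss_val_finite by meson
  obtain r where t: "t = ereal r" "0 \<le> r" using t1 less by (cases t) (auto simp: t_def)
  have \<rho>1: "gv \<rho>1 = ereal (a1 + r)"
    using gauss_val_remainder[OF dec1 \<open>h1 \<noteq> 0\<close>] a1 t by (simp add: t_def)
  have "ereal a2 + ereal r < ereal a2 + dec_t v q2 \<rho>2"
    using less t by (intro ereal_less_add) (auto simp: t_def)
  then have \<rho>2: "ereal (a2 + r) < gv \<rho>2"
    using gauss_val_remainder[OF dec2 \<open>h2 \<noteq> 0\<close>] a2 by simp
  have "gv h2 < gv (- \<rho>2)" using \<rho>2 a2 t by (cases "gv \<rho>2") auto
  then have "gv (h2 + - \<rho>2) = gv h2" by (rule gauss_val_add_eq_left)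
  then have q2: "gv (q2 ^ 2) = ereal a2" using dec2 a2 by simp
  have \<rho>: "\<rho> = \<rho>1 * q2 ^ 2 + h1 * \<rho>2"
    using dec1 dec2 by (simp add: \<rho>_def power_mult_distrib algebra_simps)
  have main: "gv (\<rho>1 * q2 ^ 2) = ereal (a1 + r + a2)" using \<rho>1 q2 by (simp add: gauss_val_mult)
  moreover have "ereal (a1 + r + a2) < gv (h1 * \<rho>2)"
    using \<rho>2 a1 by (cases "gv \<rho>2") (auto simp: gauss_val_mult)
  ultimately have smaller: "gv (\<rho>1 * q2 ^ 2) < gv (h1 * \<rho>2)" by simp
  then have gv_\<rho>: "gv \<rho> = ereal (a1 + r + a2)"
    unfolding \<rho> using main by (simp add: gauss_val_add_eq_left)
  have "q2 \<noteq> 0" using q2 by auto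
  then have odd_iff: "gauss_val_attained_odd v \<rho> \<longleftrightarrow> gauss_val_attained_odd v \<rho>1"
    unfolding \<rho> gauss_val_attained_odd_add_iff[OF smaller]
    by (rule gauss_val_attained_odd_mult_square_iff)
  show t_eq: "dec_t v (q1 * q2) \<rho> = t"
    using gv_\<rho> a1 a2 t by (simp add: dec_t_def \<rho>_def gauss_val_mult)
  have "h1 * h2 = (q1 * q2) ^ 2 + \<rho>" "h1 * h2 \<noteq> 0" "0 \<le> dec_t v (q1 * q2) \<rho>"
    using \<open>h1 \<noteq> 0\<close> \<open>h2 \<noteq> 0\<close> t_eq t1 by (simp_all add: \<rho>_def t_def)
  from good_dec_iff[OF this] good_dec_iff[OF dec1 \<open>h1 \<noteq> 0\<close> t1]
  show "good_dec v (h1 * h2) (q1 * q2) \<rho> \<longleftrightarrow> good_dec v h1 q1 \<rho>1"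
    using t_eq odd_iff by (simp add: t_def)
qed

lemma dec_t_prod_of_unique_min:
  assumes I: "finite I" "i \<in> I" and dec: "\<And>j. j \<in> I \<Longrightarrow> hs j = qs j ^ 2 + \<rho>s j"
    and nz: "\<And>j. j \<in> I \<Longrightarrow> hs j \<noteq> 0" and t: "\<And>j. j \<in> I \<Longrightarrow> 0 \<le> dec_t v (qs j) (\<rho>s j)"
    and min: "\<And>j. j \<in> I \<Longrightarrow> j \<noteq> i \<Longrightarrow> dec_t v (qs i) (\<rho>s i) < dec_t v (qs j) (\<rho>s j)"
  defines "h \<equiv> \<Prod>j\<in>I. hs j" and "q \<equiv> \<Prod>j\<in>I. qs j"
  shows "dec_t v q (h - q ^ 2) = dec_t v (qs i) (\<rho>s i) \<and>
    (good_dec v h q (h - q ^ 2) \<longleftrightarrow> good_dec v (hs i) (qs i) (\<rho>s i))"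
proof -
  define J where "J = I - {i}"
  define H where "H = (\<Prod>j\<in>J. hs j)"
  define Q where "Q = (\<Prod>j\<in>J. qs j)"
  have "finite J" using I by (simp add: J_def)
  have split: "h = hs i * H" "q = qs i * Q"
    using I by (simp_all add: h_def q_def H_def Q_def J_def prod.remove)
  show ?thesis
  proof (cases "J = {}")
    case True
    then show ?thesis using dec[OF I(2)] by (simp add: split H_def Q_def)
  next
    case False
    define c where "c = Min ((\<lambda>j. dec_t v (qs j) (\<rho>s j)) ` J)"
    have "dec_t v (qs i) (\<rho>s i) < c"
      using False \<open>finite J\<close> min by (simp add: c_def J_def)
    moreover have "c \<le> dec_t v Q (H - Q ^ 2)"
      unfolding H_def Q_def
    proof (rule dec_t_prod_ge)
      show "0 \<le> c" using False \<open>finite J\<close> t by (simp add: c_def J_def)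
    qed (use \<open>finite J\<close> dec nz in \<open>auto simp: c_def J_def\<close>)
    ultimately have less: "dec_t v (qs i) (\<rho>s i) < dec_t v Q (H - Q ^ 2)" by simp
    have "H \<noteq> 0" using \<open>finite J\<close> nz by (simp add: H_def J_def)
    have "H = Q ^ 2 + (H - Q ^ 2)" by simp
    from dec_t_mult_of_strict_min[OF dec[OF I(2)] this nz[OF I(2)] \<open>H \<noteq> 0\<close> t[OF I(2)] less]
    show ?thesis unfolding split by blast
  qed
qed

lemma not_attained_odd_remainder:
  assumes dec: "h = q ^ 2 + \<rho>" and "gv \<rho> = gv h" and not_odd: "\<not> gauss_val_attained_odd v h"
  shows "\<not> gauss_val_attained_odd v \<rho>"
proof -
  have "h \<noteq> 0" using not_odd gauss_val_attained_odd_0 by blast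
  then have fin: "\<bar>gv h\<bar> \<noteq> \<infinity>" using gauss_val_finite by fastforce
  have q: "gv h \<le> 2 * gv q"
    using gauss_val_le_square_part[OF dec] \<open>gv \<rho> = gv h\<close> by (simp add: gauss_val_power2)
  have "gv h < v (coeff \<rho> k)" if "odd k" for k
  proof -
    have "gv h < v (coeff h k)"
      using not_odd that gauss_val_le_coeff[of h k] by (auto simp: gauss_val_attained_odd_def)
    moreover have "gv h < v (coeff (q ^ 2) k)" using v_coeff_square_odd_gt[OF q fin that] .
    moreover have "coeff \<rho> k = coeff h k - coeff (q ^ 2) k" using dec by simp
    ultimately show ?thesis by (simp add: v_diff_gt)
  qed
  then show ?thesis using \<open>gv \<rho> = gv h\<close>
    by (metis gauss_val_attained_odd_def order_less_irrefl)
qed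

lemma dec_t_pos_of_good:
  assumes dec: "h = q ^ 2 + \<rho>" and not_odd: "\<not> gauss_val_attained_odd v h"
    and good: "good_dec v h q \<rho>" and t: "0 \<le> dec_t v q \<rho>" "dec_t v q \<rho> < 2 * v 2"
  shows "0 < dec_t v q \<rho>"
proof (rule ccontr)
  assume "\<not> 0 < dec_t v q \<rho>"
  then have "dec_t v q \<rho> = 0" using t(1) by simp
  moreover have "h \<noteq> 0" using not_odd gauss_val_attained_odd_0 by blast
  ultimately have "gv \<rho> = gv h" using gauss_val_remainder[OF dec] by simp
  then show False
    using not_attained_odd_remainder[OF dec _ not_odd] good good_dec_iff[OF dec \<open>h \<noteq> 0\<close> t(1)] t(2)
    by simp
qed

lemma odd_coeff_remainder_less_degree:
  assumes dec: "part_square_dec h q \<rho>" and dom: "dominant_coeff v h (degree h)"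
    and "gv h < gv \<rho>" "odd k" "coeff \<rho> k \<noteq> 0"
  shows "k < degree h"
proof -
  have h: "h = q ^ 2 + \<rho>" and deg_q: "degree q \<le> (degree h + 1) div 2"
    using dec unfolding part_square_dec_def by blast+
  then have "gv h < gv (h - q ^ 2)" using \<open>gv h < gv \<rho>\<close> by simp
  then have "even (degree h)"
    using not_attained_odd_iff_square_approx dominant_coeff_attained_odd_iff[OF dom] by blast
  then have "degree (q ^ 2) \<le> degree h"
    using deg_q degree_power_le[of q 2] by (auto elim!: evenE)
  then have "degree (h - q ^ 2) \<le> degree h" by (rule degree_diff_le[OF order.refl])
  then have "degree \<rho> \<le> degree h" using h by simp
  moreover have "k \<le> degree \<rho>" using \<open>coeff \<rho> k \<noteq> 0\<close> by (rule le_degree)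
  ultimately show ?thesis using \<open>odd k\<close> \<open>even (degree h)\<close> by (cases "k = degree h") auto
qed

lemma v_coeff_square_part_gt:
  assumes "h = q ^ 2 + \<rho>" "dominant_coeff v h n" "gv h < gv \<rho>" "i \<noteq> n"
  shows "gv h < v (coeff (q ^ 2) i)"
proof -
  have "gv h < v (coeff h i)"
    using assms(2,4) gauss_val_dominant_coeff[OF assms(2)] by (simp add: dominant_coeff_def)
  moreover have "gv h < v (coeff \<rho> i)" using assms(3) gauss_val_le_coeff[of \<rho> i] by simp
  moreover have "coeff (q ^ 2) i = coeff h i - coeff \<rho> i" using assms(1) by simp
  ultimately show ?thesis by (simp add: v_diff_gt)
qed

lemma good_dec_mult_of_dominant_coeffs:
  assumes dec1: "part_square_dec h1 q1 \<rho>1" and dec2: "h2 = q2 ^ 2 + \<rho>2"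
    and dom1: "dominant_coeff v h1 (degree h1)" and dom2: "dominant_coeff v h2 0"
    and good1: "good_dec v h1 q1 \<rho>1" and good2: "good_dec v h2 q2 \<rho>2"
    and t_eq: "dec_t v q2 \<rho>2 = dec_t v q1 \<rho>1"
    and t: "0 \<le> dec_t v q1 \<rho>1" "dec_t v q1 \<rho>1 < 2 * v 2"
  defines "\<rho> \<equiv> h1 * h2 - (q1 * q2) ^ 2"
  shows "dec_t v (q1 * q2) \<rho> = dec_t v q1 \<rho>1 \<and> good_dec v (h1 * h2) (q1 * q2) \<rho>"
proof -
  define t where "t = dec_t v q1 \<rho>1"
  have h1: "h1 = q1 ^ 2 + \<rho>1" "h1 \<noteq> 0" and h2: "h2 \<noteq> 0"
    using dec1 dom1 dom2 dominant_coeff_imp_nonzero by (auto simp: part_square_dec_def)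
  have "0 < t"
    using dec_t_pos_of_good[OF dec2 _ good2] dominant_coeff_attained_odd_iff[OF dom2] t t_eq
    by (simp add: t_def)
  obtain a1 a2 where a1: "gv h1 = ereal a1" and a2: "gv h2 = ereal a2"
    using h1 h2 gauss_val_finite by meson
  obtain r where r: "t = ereal r" "0 < r" using t \<open>0 < t\<close> by (cases t) (auto simp: t_def)
  have \<rho>1: "gv \<rho>1 = ereal (a1 + r)" and \<rho>2: "gv \<rho>2 = ereal (a2 + r)"
    using gauss_val_remainder[OF h1] gauss_val_remainder[OF dec2 h2] a1 a2 r t_eq
    by (simp_all add: t_def)
  then have "\<rho>1 \<noteq> 0" and h1_\<rho>1: "gv h1 < gv \<rho>1" using a1 r by auto
  obtain k where k: "odd k" "v (coeff \<rho>1 k) = gv \<rho>1"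
    using good1 good_dec_iff[OF h1 t(1)] t by (auto simp: gauss_val_attained_odd_def)
  then have "k < degree h1"
    using odd_coeff_remainder_less_degree[OF dec1 dom1 h1_\<rho>1] \<rho>1 by fastforce
  then have "gv h1 + gv \<rho>2 < v (coeff (q1 ^ 2 * \<rho>2) k)"
    using v_coeff_square_part_gt[OF h1(1) dom1 h1_\<rho>1] a1 \<rho>2 by (intro v_coeff_mult_gt) auto
  then have small: "ereal (a1 + r + a2) < v (coeff (q1 ^ 2 * \<rho>2) k)"
    using a1 \<rho>2 by (simp add: ac_simps)
  have "v (coeff (\<rho>1 * h2) k) = ereal (a1 + r + a2)"
    using v_coeff_mult_dominant_coeff_0[OF dom2 k(2) \<open>\<rho>1 \<noteq> 0\<close>] \<rho>1 a2 by simp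
  moreover have \<rho>: "\<rho> = \<rho>1 * h2 + q1 ^ 2 * \<rho>2"
    using h1 dec2 by (simp add: \<rho>_def power_mult_distrib algebra_simps)
  ultimately have vk: "v (coeff \<rho> k) = ereal (a1 + r + a2)"
    using v_add_eq_left small by simp
  have "gv h1 \<le> gv (q1 ^ 2)" using gauss_val_le_square_part[OF h1(1)] h1_\<rho>1 by simp
  then have "ereal (a1 + r + a2) \<le> gv (q1 ^ 2 * \<rho>2)"
    using add_right_mono[of "gv h1" "gv (q1 ^ 2)" "gv \<rho>2"] a1 \<rho>2 by (simp add: gauss_val_mult ac_simps)
  moreover have "ereal (a1 + r + a2) \<le> gv (\<rho>1 * h2)" using \<rho>1 a2 by (simp add: gauss_val_mult)
  ultimately have "ereal (a1 + r + a2) \<le> gv \<rho>" unfolding \<rho> by (intro gauss_val_add_ge)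
  then have gv_\<rho>: "gv \<rho> = ereal (a1 + r + a2)" using vk gauss_val_le_coeff[of \<rho> k] by simp
  have t_prod: "dec_t v (q1 * q2) \<rho> = t"
    using gv_\<rho> a1 a2 r by (simp add: dec_t_def \<rho>_def gauss_val_mult)
  have "h1 * h2 = (q1 * q2) ^ 2 + \<rho>" "h1 * h2 \<noteq> 0" "0 \<le> dec_t v (q1 * q2) \<rho>"
    using h1 h2 t_prod t by (simp_all add: \<rho>_def t_def)
  moreover have "gauss_val_attained_odd v \<rho>"
    using k(1) vk gv_\<rho> by (auto simp: gauss_val_attained_odd_def)
  ultimately show ?thesis using good_dec_iff t_prod by (simp add: t_def)
qed

lemma good_dec_mult_of_separated_roots:
  assumes dec1: "part_square_dec h1 q1 \<rho>1" and dec2: "h2 = q2 ^ 2 + \<rho>2"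
    and "h1 \<noteq> 0" "h2 \<noteq> 0"
    and roots1: "\<And>s. poly h1 s = 0 \<Longrightarrow> 0 < v s" and roots2: "\<And>s. poly h2 s = 0 \<Longrightarrow> v s < 0"
    and good1: "good_dec v h1 q1 \<rho>1" and good2: "good_dec v h2 q2 \<rho>2"
    and t: "0 \<le> dec_t v q1 \<rho>1" "0 \<le> dec_t v q2 \<rho>2"
    and small: "min (dec_t v q1 \<rho>1) (dec_t v q2 \<rho>2) < 2 * v 2"
  defines "\<rho> \<equiv> h1 * h2 - (q1 * q2) ^ 2"
  shows "dec_t v (q1 * q2) \<rho> = min (dec_t v q1 \<rho>1) (dec_t v q2 \<rho>2) \<and> good_dec v (h1 * h2) (q1 * q2) \<rho>"
proof -
  have h1: "h1 = q1 ^ 2 + \<rho>1" using dec1 by (simp add: part_square_dec_def)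
  consider "dec_t v q1 \<rho>1 < dec_t v q2 \<rho>2" | "dec_t v q2 \<rho>2 < dec_t v q1 \<rho>1"
    | "dec_t v q2 \<rho>2 = dec_t v q1 \<rho>1" by fastforce
  then show ?thesis
  proof cases
    case 1
    then show ?thesis
      using dec_t_mult_of_strict_min[OF h1 dec2 \<open>h1 \<noteq> 0\<close> \<open>h2 \<noteq> 0\<close> t(1)] good1
      by (simp add: \<rho>_def)
  next
    case 2
    then show ?thesis
      using dec_t_mult_of_strict_min[OF dec2 h1 \<open>h2 \<noteq> 0\<close> \<open>h1 \<noteq> 0\<close> t(2)] good2
      by (simp add: \<rho>_def mult.commute)
  next
    case 3
    then show ?thesis
      using good_dec_mult_of_dominant_coeffs[OF dec1 dec2 _ _ good1 good2 3 t(1)] small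
        dominant_coeff_degree_if_roots_pos[OF \<open>h1 \<noteq> 0\<close> roots1]
        dominant_coeff_0_if_roots_neg[OF \<open>h2 \<noteq> 0\<close> roots2]
      by (simp add: \<rho>_def)
  qed
qed

end

theorem proposition3p16:
  fixes v :: "'a::field_char_0 \<Rightarrow> ereal"
    and K :: "'a set"
    and N :: nat
    and hs qs \<rho>s :: "nat \<Rightarrow> 'a poly"
    and h q \<rho> :: "'a poly"
    and t :: ereal
    and ts :: "nat \<Rightarrow> ereal"
  assumes closed: "alg_closed_field TYPE('a)"
    and val: "is_valuation v"
    and subK: "is_subfield K"
    and disc: "discrete_on v K"
    and compl: "complete_on v K"
    and alg: "algebraic_over K"
    and res2: "0 < v 2"
    and resclosed: "residue_alg_closed v K"
    and N_pos: "1 \<le> N"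
    and h_def: "h = (\<Prod>i=1..N. hs i)"
    and hs_nz: "\<forall>i\<in>{1..N}. hs i \<noteq> 0"
    and decs: "\<forall>i\<in>{1..N}. part_square_dec (hs i) (qs i) (\<rho>s i)"
    and q_def: "q = (\<Prod>i=1..N. qs i)"
    and \<rho>_def: "\<rho> = h - q ^ 2"
    and ts_def: "\<forall>i\<in>{1..N}. ts i = dec_t v (qs i) (\<rho>s i)"
    and t_def: "t = dec_t v q \<rho>"
    and ts_nonneg: "\<forall>i\<in>{1..N}. 0 \<le> ts i"
  shows "Min (ts ` {1..N}) \<le> t
    \<and> (\<forall>i0\<in>{1..N}. (\<forall>j\<in>{1..N}. j \<noteq> i0 \<longrightarrow> ts i0 < ts j) \<longrightarrow>
          t = ts i0 \<and> (good_dec v h q \<rho> \<longleftrightarrow> good_dec v (hs i0) (qs i0) (\<rho>s i0)))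
    \<and> ((N = 2
         \<and> (\<forall>s. poly (hs 1) s = 0 \<longrightarrow> 0 < v s)
         \<and> (\<forall>s. poly (hs 2) s = 0 \<longrightarrow> v s < 0)
         \<and> good_dec v (hs 1) (qs 1) (\<rho>s 1)
         \<and> good_dec v (hs 2) (qs 2) (\<rho>s 2)
         \<and> min (ts 1) (ts 2) < 2 * v 2)
       \<longrightarrow> t = min (ts 1) (ts 2) \<and> good_dec v h q \<rho>)"
proof -
  interpret dyadic_valuation v by unfold_locales (rule val closed res2)+
  have dec: "hs i = qs i ^ 2 + \<rho>s i" if "i \<in> {1..N}" for i
    using decs that by (simp add: part_square_dec_def)
  have t: "t = dec_t v q (h - q ^ 2)" using t_def \<rho>_def by simp
  have "Min (ts ` {1..N}) \<le> t"
    unfolding t h_def q_def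
    by (rule dec_t_prod_ge) (use dec hs_nz ts_def ts_nonneg N_pos in auto)
  moreover have "t = ts i0 \<and> (good_dec v h q \<rho> \<longleftrightarrow> good_dec v (hs i0) (qs i0) (\<rho>s i0))"
    if "i0 \<in> {1..N}" "\<forall>j\<in>{1..N}. j \<noteq> i0 \<longrightarrow> ts i0 < ts j" for i0
    using dec_t_prod_of_unique_min[of "{1..N}" i0 hs qs \<rho>s] that dec hs_nz ts_def ts_nonneg
    by (simp add: t_def \<rho>_def h_def q_def)
  moreover have "t = min (ts 1) (ts 2) \<and> good_dec v h q \<rho>"
    if "N = 2" "\<forall>s. poly (hs 1) s = 0 \<longrightarrow> 0 < v s" "\<forall>s. poly (hs 2) s = 0 \<longrightarrow> v s < 0"
      "good_dec v (hs 1) (qs 1) (\<rho>s 1)" "good_dec v (hs 2) (qs 2) (\<rho>s 2)" "min (ts 1) (ts 2) < 2 * v 2"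
  proof -
    have "{1..N} = {1, 2}" using that(1) by auto
    then show ?thesis
      using good_dec_mult_of_separated_roots[of "hs 1" "qs 1" "\<rho>s 1" "hs 2" "qs 2" "\<rho>s 2"] that
        decs dec hs_nz ts_def ts_nonneg
      by (simp add: t_def \<rho>_def h_def q_def)
  qed
  ultimately show ?thesis by blast
qed

end
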